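(* Let $\mathbf u$ be a uniformly recurrent infinite word over a binary alphabet $\{0,1\}$ with finite defect $D(\mathbf u)$, and let $\varphi$ be a morphism of class $P_{ret}$ defined on $\{0,1\}^*$. Then $D(\varphi(\mathbf u))$ is finite.
   Context: For a finite word $w$, $\overline w$ denotes its reversal; $w$ is a palindrome if $w=\overline w$. The defect of a finite word $w$ is $D(w)=|w|+1-(\text{number of distinct palindromic factors of } w, \text{ including the empty word})$; the defect of an infinite word is the supremum of the defects of its prefixes. An infinite word is uniformly recurrent if every factor occurs infinitely often with bounded gaps between consecutive occurrences. A morphism $\varphi:\mathcal B^*\to\mathcal A^*$ is of class $P_{ret}$ if there exists a palindrome $p\in\mathcal A^*$ such that: (a) $\varphi(b)p$ is a palindrome for every $b\in\mathcal B$; (b) for every $b\in\mathcal B$, $\varphi(b)p$ contains exactly two occurrences of $p$, one as a prefix and one as a suffix; (c) $\varphi(b)\ne\varphi(c)$ for distinct $b,c\in\mathcal B$. *)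

theory Defs
  imports Complex_Main "HOL-Library.Extended_Real"
begin

definition palindrome :: "'a list \<Rightarrow> bool" where
  "palindrome w \<longleftrightarrow> rev w = w"

definition factors :: "'a list \<Rightarrow> 'a list set" where
  "factors w = {take j (drop i w) | i j. True}"

definition pal_factors :: "'a list \<Rightarrow> 'a list set" where
  "pal_factors w = {v \<in> factors w. palindrome v}"

definition defect :: "'a list \<Rightarrow> int" where
  "defect w = int (length w) + 1 - int (card (pal_factors w))"

definition pref :: "(nat \<Rightarrow> 'a) \<Rightarrow> nat \<Rightarrow> 'a list" where
  "pref u n = map u [0..<n]"

definition defect_inf :: "(nat \<Rightarrow> 'a) \<Rightarrow> ereal" where
  "defect_inf u = (SUP n. ereal (real_of_int (defect (pref u n))))"

definition occurs_at :: "(nat \<Rightarrow> 'a) \<Rightarrow> 'a list \<Rightarrow> nat \<Rightarrow> bool" where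
  "occurs_at u w k \<longleftrightarrow> (\<forall>t<length w. u (k + t) = w ! t)"

definition uniformly_recurrent :: "(nat \<Rightarrow> 'a) \<Rightarrow> bool" where
  "uniformly_recurrent u \<longleftrightarrow>
     (\<forall>i n. \<exists>M. \<forall>j. \<exists>k. j \<le> k \<and> k \<le> j + M \<and> occurs_at u (map u [i..<i+n]) k)"

definition morph :: "('b \<Rightarrow> 'a list) \<Rightarrow> 'b list \<Rightarrow> 'a list" where
  "morph f w = concat (map f w)"

(* image of an infinite word under a non-erasing morphism *)
definition morph_inf :: "('b \<Rightarrow> 'a list) \<Rightarrow> (nat \<Rightarrow> 'b) \<Rightarrow> nat \<Rightarrow> 'a" where
  "morph_inf f u i = morph f (pref u (Suc i)) ! i"

definition occurrences :: "'a list \<Rightarrow> 'a list \<Rightarrow> nat set" where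
  "occurrences p w = {i. i + length p \<le> length w \<and> take (length p) (drop i w) = p}"

definition class_P_ret :: "('b \<Rightarrow> 'a list) \<Rightarrow> bool" where
  "class_P_ret f \<longleftrightarrow> (\<exists>p. palindrome p \<and>
     (\<forall>b. palindrome (f b @ p)) \<and>
     (\<forall>b. card (occurrences p (f b @ p)) = 2 \<and>
          occurrences p (f b @ p) = {0, length (f b)}) \<and>
     inj f)"

end

theory Submission
  imports Defs "HOL-Library.Sublist"
begin

text \<open>Finite defect of an infinite word means that from some position on every prefix ends with a
  palindrome that has not occurred before.  We transfer this property from \<open>u\<close> to its image \<open>U\<close>.
  The occurrences of \<open>p\<close> in \<open>U\<close> are exactly the starts of the blocks \<open>f (u k)\<close>, so a long palindrome
  of \<open>U\<close> reads \<open>a @ morph f w @ p @ rev a\<close>, where \<open>w\<close> is a palindrome of \<open>u\<close> and \<open>a\<close> is a common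
  suffix of the images of the letters bordering \<open>w\<close>.  If the longest palindromic suffix of a long
  prefix of \<open>U\<close> occurred before, decoding both occurrences gives a palindromic suffix \<open>w\<close> of a prefix
  of \<open>u\<close> that occurred before.  As \<open>u\<close> is rich from some position on, \<open>w\<close> extends to a longer
  palindromic suffix whose left neighbour again has an image ending with \<open>a\<close>: over a binary alphabet
  either both images end with \<open>a\<close>, or all letters bordering the two occurrences of \<open>w\<close> coincide.
  The image of this longer palindrome is a palindromic suffix of the prefix of \<open>U\<close> that is longer
  than the longest one.  That the palindromes involved are long follows from the fact that the
  palindromic suffixes of a word over a finite alphabet that is rich from some position on grow
  without bound.\<close>

lemma palindrome_Nil [simp]: "palindrome []"
  by (simp add: palindrome_def)

lemma palindrome_append_middle_iff:
  assumes "length a = length c"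
  shows "palindrome (a @ M @ c) \<longleftrightarrow> palindrome M \<and> c = rev a"
proof
  assume "palindrome (a @ M @ c)"
  then have "rev c @ rev M @ rev a = a @ M @ c"
    unfolding palindrome_def by simp
  then show "palindrome M \<and> c = rev a"
    using assms unfolding palindrome_def by (simp add: append_eq_append_conv)
next
  assume "palindrome M \<and> c = rev a"
  then show "palindrome (a @ M @ c)"
    unfolding palindrome_def by simp
qed

lemma palindrome_prefix_iff_suffix:
  assumes "palindrome w" "palindrome v"
  shows "prefix v w \<longleftrightarrow> suffix v w"
  using assms unfolding palindrome_def suffix_to_prefix by simp

lemma drop_eq_iff_suffix:
  assumes "length a \<le> length xs"
  shows "drop (length xs - length a) xs = a \<longleftrightarrow> suffix a xs"
proof
  assume "drop (length xs - length a) xs = a"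
  then show "suffix a xs"
    using suffix_drop by metis
next
  assume "suffix a xs"
  then have "xs = take (length xs - length a) xs @ a"
    by (rule suffix_take)
  then show "drop (length xs - length a) xs = a"
    by (metis append_eq_conv_conj length_take min.absorb2 diff_le_self)
qed

lemma take_rev_eq_iff_suffix:
  assumes "length a \<le> length xs"
  shows "take (length a) (rev xs) = rev a \<longleftrightarrow> suffix a xs"
proof -
  have "take (length a) (rev xs) = rev (drop (length xs - length a) xs)"
    using assms by (simp add: rev_drop)
  then show ?thesis
    using drop_eq_iff_suffix[OF assms] by auto
qed

lemma factors_iff:
  "v \<in> factors w \<longleftrightarrow> (\<exists>i. i + length v \<le> length w \<and> take (length v) (drop i w) = v)"
proof
  assume "v \<in> factors w"
  then obtain i j where v: "v = take j (drop i w)"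
    unfolding factors_def by blast
  show "\<exists>i. i + length v \<le> length w \<and> take (length v) (drop i w) = v"
  proof (cases "i + length v \<le> length w")
    case True
    then show ?thesis using v by (intro exI[of _ i]) (auto simp: min_def)
  next
    case False
    then have "v = []" using v by auto
    then show ?thesis by (intro exI[of _ 0]) simp
  qed
next
  assume "\<exists>i. i + length v \<le> length w \<and> take (length v) (drop i w) = v"
  then obtain i where "take (length v) (drop i w) = v"
    by blast
  then show "v \<in> factors w"
    unfolding factors_def by (intro CollectI exI[of _ i] exI[of _ "length v"]) simp
qed

lemma finite_factors: "finite (factors w)"
proof (rule finite_subset)
  show "factors w \<subseteq> {v. set v \<subseteq> set w \<and> length v \<le> length w}"
    unfolding factors_def by (auto dest: in_set_takeD in_set_dropD)
  show "finite {v. set v \<subseteq> set w \<and> length v \<le> length w}"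
    by (rule finite_lists_length_le) simp
qed

lemma factors_append_right: "factors w \<subseteq> factors (w @ v)"
proof
  fix x assume "x \<in> factors w"
  then obtain i where "i + length x \<le> length w" "take (length x) (drop i w) = x"
    unfolding factors_iff by blast
  then show "x \<in> factors (w @ v)"
    unfolding factors_iff by (intro exI[of _ i]) simp
qed

section \<open>Longest palindromic suffix and defect\<close>

definition lps :: "'a list \<Rightarrow> 'a list" where
  "lps w = drop (LEAST k. palindrome (drop k w)) w"

lemma palindrome_lps: "palindrome (lps w)"
  unfolding lps_def by (rule LeastI[of _ "length w"]) simp

lemma lps_eq_drop: "lps w = drop (length w - length (lps w)) w"
  unfolding lps_def using Least_le[of "\<lambda>k. palindrome (drop k w)" "length w"] by simp

lemma length_lps_le: "length (lps w) \<le> length w"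
  unfolding lps_def by simp

lemma length_lps_maximal: "palindrome (drop k w) \<Longrightarrow> length w - k \<le> length (lps w)"
  unfolding lps_def using Least_le[of "\<lambda>k. palindrome (drop k w)" k] by simp

lemma lps_in_factors: "lps w \<in> factors w"
  unfolding factors_iff using length_lps_le[of w] lps_eq_drop[of w]
  by (intro exI[of _ "length w - length (lps w)"]) simp

lemma suffix_lps: "suffix (lps w) w"
  by (subst lps_eq_drop) (rule suffix_drop)

text \<open>A palindromic suffix shorter than the longest one is mirrored in a prefix of the latter.\<close>

lemma palindromic_suffix_in_factors:
  assumes suf: "suffix v (w @ [x])" and pal: "palindrome v" and "v \<noteq> lps (w @ [x])"
  shows "v \<in> factors w"
proof -
  let ?W = "w @ [x]" and ?L = "lps (w @ [x])"
  define k where "k = length ?W - length ?L"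
  have v: "drop (length ?W - length v) ?W = v"
    using suf drop_eq_iff_suffix suffix_length_le by blast
  have L: "drop k ?W = ?L"
    unfolding k_def by (rule lps_eq_drop[symmetric])
  have "length v \<le> length ?L"
    using length_lps_maximal[of "length ?W - length v" ?W] pal v suffix_length_le[OF suf] by simp
  moreover have "length v \<noteq> length ?L"
    using v L \<open>v \<noteq> ?L\<close> unfolding k_def by auto
  ultimately have "length v < length ?L"
    by simp
  then have "suffix v ?L"
    using suffix_same_cases[OF suf suffix_lps] suffix_length_le[of ?L v] by auto
  then have "prefix v ?L"
    using palindrome_prefix_iff_suffix[OF palindrome_lps pal] by simp
  then have "take (length v) (drop k ?W) = v"
    unfolding L by (auto simp: prefix_def)
  moreover have "k + length v \<le> length w"
    using \<open>length v < length ?L\<close> length_lps_le[of ?W] unfolding k_def by simp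
  ultimately show ?thesis
    unfolding factors_iff by (intro exI[of _ k]) simp
qed

lemma pal_factors_snoc:
  "pal_factors (w @ [x]) = insert (lps (w @ [x])) (pal_factors w)"
proof -
  let ?W = "w @ [x]" and ?L = "lps (w @ [x])"
  have "v \<in> factors w" if "v \<in> pal_factors ?W" "v \<noteq> ?L" for v
  proof -
    from that obtain i where i: "i + length v \<le> length ?W" "take (length v) (drop i ?W) = v"
      and pal: "palindrome v"
      unfolding pal_factors_def factors_iff by blast
    show ?thesis
    proof (cases "i + length v \<le> length w")
      case True
      with i show ?thesis
        unfolding factors_iff by (intro exI[of _ i]) simp
    next
      case False
      then have "drop i ?W = v"
        using i by simp
      then have "suffix v ?W"
        using suffix_drop[of i ?W] by simp
      then show ?thesis
        by (rule palindromic_suffix_in_factors[OF _ pal that(2)])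
    qed
  qed
  moreover have "pal_factors w \<subseteq> pal_factors ?W"
    using factors_append_right unfolding pal_factors_def by blast
  ultimately show ?thesis
    using lps_in_factors palindrome_lps unfolding pal_factors_def by blast
qed

lemma defect_snoc:
  "defect (w @ [x]) = defect w + (if lps (w @ [x]) \<in> factors w then 1 else 0)"
proof -
  have "lps (w @ [x]) \<in> pal_factors w \<longleftrightarrow> lps (w @ [x]) \<in> factors w"
    using palindrome_lps unfolding pal_factors_def by auto
  moreover have "finite (pal_factors w)"
    using finite_factors[of w] unfolding pal_factors_def by simp
  ultimately show ?thesis
    unfolding defect_def pal_factors_snoc by (auto simp: card_insert_if)
qed

lemma pref_Suc: "pref g (Suc m) = pref g m @ [g m]"
  by (simp add: pref_def)

lemma defect_pref_Suc:
  "defect (pref g (Suc m)) =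
     defect (pref g m) + (if lps (pref g (Suc m)) \<in> factors (pref g m) then 1 else 0)"
  unfolding pref_Suc by (rule defect_snoc)

lemma defect_pref_mono: "n \<le> m \<Longrightarrow> defect (pref g n) \<le> defect (pref g m)"
proof (induction m)
  case (Suc m)
  then show ?case
    using defect_pref_Suc[of g m] by (cases "n = Suc m") auto
qed simp

lemma defect_pref_0: "defect (pref g 0) = 0"
proof -
  have "pal_factors (pref g 0) = {[]}"
    unfolding pal_factors_def factors_def pref_def by auto
  then show ?thesis
    by (simp add: defect_def pref_def)
qed

text \<open>In a rich word (defect \<open>0\<close>) every prefix ends with a palindrome that has not occurred
  before; \<open>rich_from g N\<close> asks this only for the prefixes longer than \<open>N\<close>.\<close>

definition rich_from :: "(nat \<Rightarrow> 'a) \<Rightarrow> nat \<Rightarrow> bool" where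
  "rich_from g N \<longleftrightarrow> (\<forall>m\<ge>N. lps (pref g (Suc m)) \<notin> factors (pref g m))"

lemma rich_from_if_defect_inf_finite:
  assumes "defect_inf g < \<infinity>"
  obtains N where "rich_from g N"
proof -
  let ?D = "\<lambda>n. defect (pref g n)"
  have "ereal (real_of_int (?D 0)) \<le> defect_inf g"
    unfolding defect_inf_def by (rule SUP_upper) simp
  then obtain r where r: "defect_inf g = ereal r"
    using assms by (cases "defect_inf g") auto
  have "real_of_int (?D n) \<le> r" for n
    using SUP_upper[of n UNIV "\<lambda>n. ereal (real_of_int (?D n))"] r
    unfolding defect_inf_def by simp
  then have "range ?D \<subseteq> {0..\<lfloor>r\<rfloor>}"
    using defect_pref_mono[of 0 _ g] defect_pref_0[of g] by (auto simp: le_floor_iff)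
  then have "finite (range ?D)"
    by (rule finite_subset) simp
  then obtain N where N: "\<And>n. ?D n \<le> ?D N"
    using Max_in[of "range ?D"] Max_ge[of "range ?D"] by fastforce
  have "rich_from g N"
    unfolding rich_from_def
  proof (intro allI impI notI)
    fix m assume "N \<le> m" "lps (pref g (Suc m)) \<in> factors (pref g m)"
    then have "?D N < ?D (Suc m)"
      using defect_pref_Suc[of g m] defect_pref_mono[of N m g] by simp
    then show False
      using N[of "Suc m"] by simp
  qed
  then show thesis by (rule that)
qed

lemma defect_inf_finite_if_rich_from:
  assumes "rich_from g N"
  shows "defect_inf g < \<infinity>"
proof -
  have "defect (pref g m) \<le> defect (pref g N)" for m
  proof (cases "m \<le> N")
    case False
    have "defect (pref g (N + d)) = defect (pref g N)" for d
      using assms defect_pref_Suc[of g "N + _"] unfolding rich_from_def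
      by (induction d) simp_all
    then show ?thesis
      using False by (metis le_add_diff_inverse nle_le order_refl)
  qed (rule defect_pref_mono)
  then have "defect_inf g \<le> ereal (real_of_int (defect (pref g N)))"
    unfolding defect_inf_def by (intro SUP_least) simp
  then show ?thesis
    using order.strict_trans1 by fastforce
qed

definition seg :: "(nat \<Rightarrow> 'a) \<Rightarrow> nat \<Rightarrow> nat \<Rightarrow> 'a list" where
  "seg g x l = map (\<lambda>t. g (x + t)) [0..<l]"

lemma length_seg [simp]: "length (seg g x l) = l"
  by (simp add: seg_def)

lemma nth_seg [simp]: "t < l \<Longrightarrow> seg g x l ! t = g (x + t)"
  by (simp add: seg_def)

lemma seg_0 [simp]: "seg g x 0 = []"
  by (simp add: seg_def)

lemma seg_eq_iff: "seg g x l = v \<longleftrightarrow> length v = l \<and> (\<forall>t<l. g (x + t) = v ! t)"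
  unfolding list_eq_iff_nth_eq by (simp add: eq_commute)

lemma seg_add: "seg g x (a + b) = seg g x a @ seg g (x + a) b"
  by (rule nth_equalityI) (simp_all add: nth_append add.assoc)

lemma seg_Suc_0: "seg g x (Suc 0) = [g x]"
  by (simp add: seg_def)

lemma seg_Suc_outer: "seg g x (n + 2) = [g x] @ seg g (Suc x) n @ [g (Suc x + n)]"
  using seg_add[of g x 1 "n + 1"] seg_add[of g "Suc x" n 1] by (simp add: seg_Suc_0)

lemma take_seg: "q \<le> l \<Longrightarrow> take q (seg g x l) = seg g x q"
  by (rule nth_equalityI) simp_all

lemma drop_seg: "r \<le> l \<Longrightarrow> drop r (seg g x l) = seg g (x + r) (l - r)"
  by (rule nth_equalityI) (simp_all add: add.assoc)

lemma pref_eq_seg: "pref g n = seg g 0 n"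
  by (rule nth_equalityI) (simp_all add: pref_def)

lemma length_pref [simp]: "length (pref g n) = n"
  by (simp add: pref_def)

lemma pref_add: "pref g (k + n) = pref g k @ seg g k n"
  unfolding pref_eq_seg using seg_add[of g 0 k n] by simp

lemma take_pref: "a \<le> n \<Longrightarrow> take a (pref g n) = pref g a"
  by (simp add: pref_eq_seg take_seg)

lemma drop_pref: "drop x (pref g n) = seg g x (n - x)"
  by (cases "x \<le> n") (simp_all add: pref_eq_seg drop_seg)

lemma occurs_at_iff_seg: "occurs_at g w x \<longleftrightarrow> seg g x (length w) = w"
  unfolding occurs_at_def seg_eq_iff by simp

lemma prefix_seg_iff: "prefix v (seg g x n) \<longleftrightarrow> length v \<le> n \<and> seg g x (length v) = v"
proof
  assume "prefix v (seg g x n)"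
  then obtain z where z: "seg g x n = v @ z"
    by (auto simp: prefix_def)
  then have "length v \<le> n"
    by (metis le_add1 length_append length_seg)
  moreover have "take (length v) (seg g x n) = v"
    by (simp add: z)
  ultimately show "length v \<le> n \<and> seg g x (length v) = v"
    by (simp add: take_seg)
next
  assume "length v \<le> n \<and> seg g x (length v) = v"
  then show "prefix v (seg g x n)"
    using take_is_prefix[of "length v" "seg g x n"] by (simp add: take_seg)
qed

lemma suffix_seg_iff:
  "suffix v (seg g x n) \<longleftrightarrow> length v \<le> n \<and> seg g (x + (n - length v)) (length v) = v"
proof
  assume "suffix v (seg g x n)"
  then obtain z where z: "seg g x n = z @ v"
    by (auto simp: suffix_def)
  then have n: "n = length z + length v"
    by (metis length_append length_seg)
  have "drop (length z) (seg g x n) = v"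
    by (simp add: z)
  then show "length v \<le> n \<and> seg g (x + (n - length v)) (length v) = v"
    by (simp add: drop_seg n)
next
  assume "length v \<le> n \<and> seg g (x + (n - length v)) (length v) = v"
  then have le: "length v \<le> n" and v: "seg g (x + (n - length v)) (length v) = v"
    by auto
  have "seg g x n = seg g x (n - length v) @ seg g (x + (n - length v)) (length v)"
    using seg_add[of g x "n - length v" "length v"] le by simp
  then have "seg g x n = seg g x (n - length v) @ v"
    unfolding v .
  then show "suffix v (seg g x n)"
    by (simp add: suffix_def)
qed

lemma palindrome_seg_iff:
  "palindrome (seg g x l) \<longleftrightarrow> (\<forall>t<l. g (x + t) = g (x + (l - 1 - t)))"
  unfolding palindrome_def list_eq_iff_nth_eq by (auto simp: rev_nth)

lemma palindrome_seg_inner: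
  assumes "palindrome (seg g x (n + 2))"
  shows "palindrome (seg g (Suc x) n)" "g (Suc x + n) = g x"
  using assms palindrome_append_middle_iff[of "[g x]" "[g (Suc x + n)]" "seg g (Suc x) n"]
  unfolding seg_Suc_outer by simp_all

lemma occurs_at_seg_transfer:
  assumes "seg g y l = seg g x l" "t + length w \<le> l"
  shows "occurs_at g w (y + t) \<longleftrightarrow> occurs_at g w (x + t)"
proof -
  have "g (y + t + r) = g (x + t + r)" if "r < length w" for r
    using assms that nth_seg[of "t + r" l g y] nth_seg[of "t + r" l g x] by (simp add: add.assoc)
  then show ?thesis
    unfolding occurs_at_def by simp
qed

lemma occurs_at_palindrome_mirror:
  assumes "palindrome (seg g x l)" "palindrome w" "occurs_at g w (x + t)" "t + length w \<le> l"
  shows "occurs_at g w (x + (l - length w - t))"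
  unfolding occurs_at_def
proof (intro allI impI)
  fix r assume r: "r < length w"
  have mirror: "\<And>t. t < l \<Longrightarrow> g (x + t) = g (x + (l - 1 - t))"
    using assms(1) unfolding palindrome_seg_iff by blast
  have "g (x + (l - length w - t) + r) = g (x + (l - length w - t + r))"
    by (simp add: add.assoc)
  also have "\<dots> = g (x + (l - 1 - (l - length w - t + r)))"
    using mirror[of "l - length w - t + r"] r assms(4) by linarith
  also have "\<dots> = g (x + t + (length w - 1 - r))"
    by (rule arg_cong[where f = g]) (use r assms(4) in arith)
  also have "\<dots> = w ! (length w - 1 - r)"
    using assms(3) unfolding occurs_at_def by (rule allE[of _ "length w - 1 - r"]) (use r in simp)
  also have "\<dots> = w ! r"
    using assms(2) r rev_nth[of r w] unfolding palindrome_def by simp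
  finally show "g (x + (l - length w - t) + r) = w ! r" .
qed

lemma factors_pref_iff:
  "v \<in> factors (pref g m) \<longleftrightarrow> (\<exists>x. x + length v \<le> m \<and> seg g x (length v) = v)"
  unfolding factors_iff pref_eq_seg by (auto simp: drop_seg take_seg)

lemma factors_pref_mono: "a \<le> b \<Longrightarrow> v \<in> factors (pref g a) \<Longrightarrow> v \<in> factors (pref g b)"
  unfolding factors_pref_iff by (meson le_trans)

lemma lps_pref_eq_seg:
  "lps (pref g n) = seg g (n - length (lps (pref g n))) (length (lps (pref g n)))"
  using lps_eq_drop[of "pref g n"] length_lps_le[of "pref g n"]
  by (simp add: pref_eq_seg drop_seg)

lemma length_lps_pref_le: "length (lps (pref g n)) \<le> n"
  using length_lps_le[of "pref g n"] by simp

lemma palindrome_seg_le_lps_pref: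
  assumes "palindrome (seg g y l)" "y + l = n"
  shows "l \<le> length (lps (pref g n))"
proof -
  have "drop y (pref g n) = seg g y l"
    using assms(2) by (auto simp: pref_eq_seg drop_seg)
  then have "palindrome (drop y (pref g n))"
    using assms(1) by simp
  then show ?thesis
    using length_lps_maximal assms(2) by fastforce
qed

lemma rich_fromD: "rich_from g N \<Longrightarrow> N < n \<Longrightarrow> lps (pref g n) \<notin> factors (pref g (n - 1))"
proof -
  assume "rich_from g N" "N < n"
  moreover have "Suc (n - 1) = n"
    using \<open>N < n\<close> by simp
  ultimately show ?thesis
    unfolding rich_from_def by (metis less_Suc_eq_le)
qed

section \<open>Repeated palindromic suffixes in rich words\<close>

text \<open>If a palindromic suffix of the prefix of length \<open>j\<close> already occurred earlier, then it is not
  the longest palindromic suffix, since the latter is new.\<close>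

lemma repeated_palindromic_suffix_extends:
  assumes rich: "rich_from g N" and "N < j" "i' < i" "i \<le> j"
    and pal: "palindrome (seg g i (j - i))" and rep: "seg g i' (j - i) = seg g i (j - i)"
  obtains i2 where "i2 < i" "palindrome (seg g i2 (j - i2))"
proof -
  define l where "l = length (lps (pref g j))"
  have lps: "lps (pref g j) = seg g (j - l) l" and "l \<le> j"
    unfolding l_def by (rule lps_pref_eq_seg, rule length_lps_pref_le)
  have "j - i \<le> l"
    unfolding l_def by (rule palindrome_seg_le_lps_pref[OF pal]) (use \<open>i \<le> j\<close> in linarith)
  moreover have "l \<noteq> j - i"
  proof
    assume "l = j - i"
    then have "lps (pref g j) = seg g i' (j - i)"
      using lps rep \<open>i \<le> j\<close> by simp
    moreover have "i' + (j - i) \<le> j - 1"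
      using \<open>i' < i\<close> \<open>i \<le> j\<close> by simp
    ultimately have "lps (pref g j) \<in> factors (pref g (j - 1))"
      unfolding factors_pref_iff by auto
    then show False
      using rich_fromD[OF rich \<open>N < j\<close>] by simp
  qed
  ultimately have "j - l < i" and "palindrome (seg g (j - l) (j - (j - l)))"
    using lps palindrome_lps[of "pref g j"] \<open>l \<le> j\<close> \<open>i \<le> j\<close> by simp_all
  then show thesis by (rule that)
qed

text \<open>The shortest nonempty prefix ending with the repeated palindrome turns out to be a palindrome
  as well; reflecting it in the palindromic prefix of length \<open>j\<close> gives the required suffix.\<close>

lemma repeated_palindromic_suffix_of_palindromic_prefix:
  assumes rich: "rich_from g N" and "N \<le> j - i" "0 < i'" "i' < i" "i \<le> j"
    and palj: "palindrome (seg g 0 j)" and pal: "palindrome (seg g i (j - i))"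
    and rep: "seg g i' (j - i) = seg g i (j - i)"
  obtains i3 where "0 < i3" "i3 < i" "palindrome (seg g i3 (j - i3))"
proof -
  define n where "n = j - i"
  define w where "w = seg g i n"
  have palw: "palindrome w"
    using pal by (simp add: w_def n_def)
  define i1 where "i1 = (LEAST k. 0 < k \<and> seg g k n = w)"
  have i1: "0 < i1" "seg g i1 n = w"
    unfolding i1_def by (rule LeastI2[of _ i']; use \<open>0 < i'\<close> rep in \<open>simp add: w_def n_def\<close>)+
  have "i1 \<le> i'"
    unfolding i1_def by (rule Least_le) (use \<open>0 < i'\<close> rep in \<open>simp add: w_def n_def\<close>)
  have "suffix w (seg g 0 j)"
    unfolding suffix_seg_iff w_def n_def using \<open>i \<le> j\<close> by simp
  then have "seg g 0 n = w"
    using palindrome_prefix_iff_suffix[OF palj pal] unfolding prefix_seg_iff w_def n_def by simp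
  then have "seg g 0 (i1 + n - i1) = seg g i1 (i1 + n - i1)"
    "palindrome (seg g i1 (i1 + n - i1))" "N < i1 + n"
    using i1 pal assms(2) by (simp_all add: w_def n_def)
  then obtain z where "z < i1" and palz: "palindrome (seg g z (i1 + n - z))"
    using repeated_palindromic_suffix_extends[OF rich _ \<open>0 < i1\<close>] by (metis le_add1)
  have "suffix w (seg g z (i1 + n - z))"
    unfolding suffix_seg_iff using \<open>z < i1\<close> i1 by (simp add: w_def)
  then have "seg g z n = w"
    using palindrome_prefix_iff_suffix[OF palz palw] unfolding prefix_seg_iff by (simp add: w_def)
  then have "z = 0"
    using \<open>z < i1\<close> not_less_Least[of z "\<lambda>k. 0 < k \<and> seg g k n = w"] unfolding i1_def by auto
  have "prefix (seg g 0 (i1 + n)) (seg g 0 j)"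
    unfolding prefix_seg_iff using \<open>i1 \<le> i'\<close> \<open>i' < i\<close> \<open>i \<le> j\<close> by (simp add: n_def)
  then have "suffix (seg g 0 (i1 + n)) (seg g 0 j)"
    using palindrome_prefix_iff_suffix[OF palj] palz \<open>z = 0\<close> by simp
  then have "palindrome (seg g (j - (i1 + n)) (i1 + n))"
    unfolding suffix_seg_iff using palz \<open>z = 0\<close> by simp
  moreover have "j - (j - (i1 + n)) = i1 + n" "0 < j - (i1 + n)" "j - (i1 + n) < i"
    using \<open>0 < i1\<close> \<open>i1 \<le> i'\<close> \<open>i' < i\<close> \<open>i \<le> j\<close> by (simp_all add: n_def)
  ultimately show thesis
    using that[of "j - (i1 + n)"] by (simp only:)
qed

lemma repeated_palindromic_suffix_extends_nonzero:
  assumes rich: "rich_from g N" and "N \<le> j - i" "0 < i'" "i' < i" "i \<le> j"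
    and pal: "palindrome (seg g i (j - i))" and rep: "seg g i' (j - i) = seg g i (j - i)"
  obtains i3 where "0 < i3" "i3 < i" "palindrome (seg g i3 (j - i3))"
proof -
  have "N < j"
    using assms(2-5) by linarith
  then obtain i2 where "i2 < i" and pal2: "palindrome (seg g i2 (j - i2))"
    by (rule repeated_palindromic_suffix_extends[OF rich _ \<open>i' < i\<close> \<open>i \<le> j\<close> pal rep])
  show thesis
  proof (cases "0 < i2")
    case True
    show thesis using True \<open>i2 < i\<close> pal2 by (rule that)
  next
    case False
    then have "palindrome (seg g 0 j)"
      using pal2 by simp
    then show thesis
      using repeated_palindromic_suffix_of_palindromic_prefix[OF rich assms(2-5) _ pal rep] that by blast
  qed
qed

text \<open>Bordering the repeated palindrome by the common letter gives a repeated palindrome two letters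
  longer; stripping the border off its extension gives the result.\<close>

lemma repeated_bordered_palindromic_suffix_extends:
  assumes rich: "rich_from g N" and "N \<le> j" "0 < i'" "i' < i" "i \<le> j"
    and pal: "palindrome (seg g i (j - i))" and rep: "seg g i' (j - i) = seg g i (j - i)"
    and border: "g (i' - 1) = g j" "g (i - 1) = g j" "g (i' + (j - i)) = g j"
  obtains i3 where "0 < i3" "i3 < i" "g (i3 - 1) = g j" "palindrome (seg g i3 (j - i3))"
proof -
  have outer: "seg g (k - 1) (j - i + 2) = [g (k - 1)] @ seg g k (j - i) @ [g (k + (j - i))]"
    if "0 < k" for k
    using seg_Suc_outer[of g "k - 1" "j - i"] that by simp
  have palv: "palindrome (seg g (i - 1) (Suc j - (i - 1)))"
    using outer[of i] pal border \<open>i' < i\<close> \<open>i \<le> j\<close>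
      palindrome_append_middle_iff[of "[g j]" "[g j]" "seg g i (j - i)"]
    by (simp add: Suc_diff_le)
  moreover have repv: "seg g (i' - 1) (Suc j - (i - 1)) = seg g (i - 1) (Suc j - (i - 1))"
    using outer[of i] outer[of i'] rep border \<open>0 < i'\<close> \<open>i' < i\<close> \<open>i \<le> j\<close>
    by (simp add: Suc_diff_le)
  moreover have "N < Suc j" "i' - 1 < i - 1" "i - 1 \<le> Suc j"
    using \<open>N \<le> j\<close> \<open>0 < i'\<close> \<open>i' < i\<close> \<open>i \<le> j\<close> by simp_all
  ultimately obtain i2 where "i2 < i - 1" and pal2: "palindrome (seg g i2 (Suc j - i2))"
    using repeated_palindromic_suffix_extends[OF rich] by metis
  have "Suc j - i2 = (j - Suc i2) + 2"
    using \<open>i2 < i - 1\<close> \<open>i \<le> j\<close> by simp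
  then have "palindrome (seg g (Suc i2) (j - Suc i2))" "g (Suc i2 + (j - Suc i2)) = g i2"
    using palindrome_seg_inner[of g i2 "j - Suc i2"] pal2 by (simp_all only:)
  moreover have "Suc i2 + (j - Suc i2) = j"
    using \<open>i2 < i - 1\<close> \<open>i \<le> j\<close> by simp
  ultimately show thesis
    using that[of "Suc i2"] \<open>i2 < i - 1\<close> by simp
qed

text \<open>Only finitely many short words occur in \<open>g\<close>, all of them within some prefix; beyond it no
  new palindromic suffix can be short.\<close>

lemma rich_from_lps_pref_unbounded:
  fixes g :: "nat \<Rightarrow> 'a::finite"
  assumes rich: "rich_from g N"
  obtains T where "\<And>n. T \<le> n \<Longrightarrow> B \<le> length (lps (pref g n))"
proof -
  define F where "F = {v. length v < B \<and> (\<exists>K. v \<in> factors (pref g K))}"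
  define first where "first v = (LEAST K. v \<in> factors (pref g K))" for v
  have "F \<subseteq> {v. set v \<subseteq> UNIV \<and> length v \<le> B}"
    unfolding F_def by auto
  then have "finite F"
    by (rule finite_subset) (rule finite_lists_length_le, simp)
  define T where "T = Suc (Max (insert N (first ` F)))"
  have "B \<le> length (lps (pref g n))" if "T \<le> n" for n
  proof (rule ccontr)
    let ?L = "lps (pref g n)"
    assume "\<not> B \<le> length ?L"
    then have "?L \<in> F"
      unfolding F_def using lps_in_factors by auto
    have "first ?L \<le> Max (insert N (first ` F))" "N \<le> Max (insert N (first ` F))"
      using \<open>finite F\<close> \<open>?L \<in> F\<close> by simp_all
    then have "first ?L \<le> n - 1" "N < n"
      using that unfolding T_def by simp_all
    moreover have "?L \<in> factors (pref g (first ?L))"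
      using \<open>?L \<in> F\<close> unfolding F_def first_def by (auto intro: LeastI_ex)
    ultimately have "?L \<in> factors (pref g (n - 1))"
      using factors_pref_mono by blast
    then show False
      using rich_fromD[OF rich \<open>N < n\<close>] by simp
  qed
  then show thesis by (rule that)
qed

section \<open>Morphisms of class \<open>P_ret\<close>\<close>

lemma morph_Nil [simp]: "morph f [] = []"
  by (simp add: morph_def)

lemma morph_Cons [simp]: "morph f (b # w) = f b @ morph f w"
  by (simp add: morph_def)

lemma morph_append [simp]: "morph f (w @ v) = morph f w @ morph f v"
  by (simp add: morph_def)

lemma morph_pref_Suc: "morph f (pref g (Suc k)) = morph f (pref g k) @ f (g k)"
  by (simp add: pref_Suc)

lemma suffix_morph_pref_iff:
  assumes "0 < k" "length a \<le> length (f (g (k - 1)))"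
  shows "suffix a (morph f (pref g k)) \<longleftrightarrow> suffix a (f (g (k - 1)))"
proof -
  have "morph f (pref g k) = morph f (pref g (k - 1)) @ f (g (k - 1))"
    using assms(1) morph_pref_Suc[of f g "k - 1"] by simp
  then show ?thesis
    using assms(2) by (auto simp: suffix_append suffix_appendI)
qed

text \<open>The conditions of \<open>class_P_ret\<close> with the palindrome \<open>p\<close> fixed; the images are nonempty
  because \<open>0\<close> and \<open>length (f b)\<close> must be two distinct occurrences of \<open>p\<close>.\<close>

locale P_ret_morphism =
  fixes f :: "'b \<Rightarrow> 'a list" and p :: "'a list"
  assumes palindrome_p: "palindrome p"
    and palindrome_image_p: "\<And>b. palindrome (f b @ p)"
    and occurrences_p: "\<And>b. occurrences p (f b @ p) = {0, length (f b)}"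
    and inj_f: "inj f"
    and image_nonempty: "\<And>b. f b \<noteq> []"
begin

lemma image_append_p: "f b @ p = p @ rev (f b)"
  using palindrome_image_p[of b] palindrome_p unfolding palindrome_def
  by (metis rev_append)

lemma morph_append_p: "morph f w @ p = p @ rev (morph f (rev w))"
proof (induction w)
  case (Cons b w)
  have "morph f (b # w) @ p = (f b @ p) @ rev (morph f (rev w))"
    using Cons by simp
  also have "\<dots> = p @ rev (morph f (rev (b # w)))"
    by (simp add: image_append_p)
  finally show ?case .
qed simp

lemma rev_morph_append_p: "rev (morph f w @ p) = morph f (rev w) @ p"
  using morph_append_p[of "rev w"] palindrome_p unfolding palindrome_def by simp

lemma length_morph_ge: "length w \<le> length (morph f w)"
proof (induction w)
  case (Cons b w)
  have "0 < length (f b)"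
    using image_nonempty[of b] by simp
  with Cons show ?case
    by (simp del: length_greater_0_conv)
qed simp

lemma prefix_image_append_p_imp_eq:
  assumes "prefix (f b @ p) (f c @ p)"
  shows "f b = f c"
proof -
  obtain z where z: "f c @ p = f b @ p @ z"
    using assms by (auto simp: prefix_def)
  then have "length (f b) \<in> occurrences p (f c @ p)"
    unfolding occurrences_def by (simp add: z)
  then have "length (f b) = length (f c)"
    using occurrences_p[of c] image_nonempty[of b] by auto
  then show ?thesis
    using z by simp
qed

lemma prefix_image_append_p:
  assumes "prefix (f b @ p) (f c @ p @ z)"
  shows "b = c"
proof -
  have "prefix (f b @ p) (f c @ p) \<or> prefix (f c @ p) (f b @ p)"
    using prefix_same_cases[OF assms, of "f c @ p"] by simp
  then have "f b = f c"
    by (auto dest: prefix_image_append_p_imp_eq)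
  then show ?thesis
    using inj_f by (simp add: inj_eq)
qed

lemma prefix_morph_append_p: "prefix (morph f w @ p) (morph f v @ p) \<Longrightarrow> prefix w v"
proof (induction w arbitrary: v)
  case (Cons b w)
  obtain c v' where v: "v = c # v'"
  proof (cases v)
    case Nil
    then have "length (f b @ morph f w @ p) \<le> length p"
      using Cons.prems prefix_length_le by fastforce
    then show thesis
      using image_nonempty[of b] by simp
  qed
  have "prefix (f b @ p @ rev (morph f (rev w))) (f c @ p @ rev (morph f (rev v')))"
    using Cons.prems unfolding v by (simp add: morph_append_p)
  then have "prefix (f b @ p) (f c @ p @ rev (morph f (rev v')))"
    by (rule prefix_order.trans[rotated]) (metis append.assoc prefixI)
  then have "b = c"
    by (rule prefix_image_append_p)
  then have "prefix (morph f w @ p) (morph f v' @ p)"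
    using Cons.prems unfolding v by simp
  then show ?case
    using Cons.IH \<open>b = c\<close> v by simp
qed simp

lemma morph_append_p_inj: "morph f w @ p = morph f v @ p \<Longrightarrow> w = v"
  using prefix_morph_append_p[of w v] prefix_morph_append_p[of v w] by simp

lemma palindrome_morph_append_p_iff: "palindrome (morph f w @ p) \<longleftrightarrow> palindrome w"
  using morph_append_p_inj[of "rev w" w] rev_morph_append_p[of w]
  unfolding palindrome_def by auto

end

section \<open>The image of an infinite word\<close>

locale P_ret_image = P_ret_morphism f p for f :: "'b \<Rightarrow> 'a list" and p +
  fixes u :: "nat \<Rightarrow> 'b"
begin

abbreviation U :: "nat \<Rightarrow> 'a" where
  "U \<equiv> morph_inf f u"

definition pos :: "nat \<Rightarrow> nat" where
  "pos k = length (morph f (pref u k))"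

lemma pos_0 [simp]: "pos 0 = 0"
  by (simp add: pos_def pref_def)

lemma pos_Suc: "pos (Suc k) = pos k + length (f (u k))"
  by (simp add: pos_def morph_pref_Suc)

lemma pos_add: "pos (k + n) = pos k + length (morph f (seg u k n))"
  by (simp add: pos_def pref_add)

lemma pos_add_ge: "pos k + n \<le> pos (k + n)"
  using pos_add[of k n] length_morph_ge[of "seg u k n"] by simp

lemma strict_mono_pos: "strict_mono pos"
  unfolding strict_mono_Suc_iff using image_nonempty by (simp add: pos_Suc)

lemma pos_less_iff [simp]: "pos a < pos b \<longleftrightarrow> a < b"
  using strict_mono_pos by (rule strict_mono_less)

lemma pos_le_iff [simp]: "pos a \<le> pos b \<longleftrightarrow> a \<le> b"
  using strict_mono_pos by (rule strict_mono_less_eq)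

lemma pos_interval:
  obtains k where "pos k \<le> x" "x < pos (Suc k)"
proof -
  define k where "k = (LEAST k. x < pos (Suc k))"
  have "x < pos (Suc x)"
    using pos_add_ge[of 0 "Suc x"] by simp
  then have "x < pos (Suc k)"
    unfolding k_def by (rule LeastI)
  moreover have "pos k \<le> x"
  proof (cases k)
    case (Suc k')
    then have "\<not> x < pos (Suc k')"
      using not_less_Least[of k' "\<lambda>k. x < pos (Suc k)"] unfolding k_def by simp
    then show ?thesis
      using Suc by simp
  qed simp
  ultimately show thesis
    using that by blast
qed

lemma U_eq_nth_morph:
  assumes "x < pos M"
  shows "U x = morph f (pref u M) ! x"
proof -
  have indep: "morph f (pref u K) ! x = morph f (pref u k) ! x" if "x < pos k" "k \<le> K" for k K
    using that pref_add[of u k "K - k"] unfolding pos_def by (simp add: nth_append)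
  have "x < pos (Suc x)"
    using pos_add_ge[of 0 "Suc x"] by simp
  then show ?thesis
    unfolding morph_inf_def
    using indep[of M "max M (Suc x)"] indep[of "Suc x" "max M (Suc x)"] assms by simp
qed

lemma pref_U_pos: "pref U (pos k + length p) = morph f (pref u k) @ p"
proof (rule nth_equalityI)
  fix x assume "x < length (pref U (pos k + length p))"
  then have x: "x < pos k + length p"
    by simp
  define M where "M = k + length p"
  have "x < pos M"
    using x pos_add_ge[of k "length p"] unfolding M_def by simp
  have eq: "morph f (pref u M) @ p =
      (morph f (pref u k) @ p) @ rev (morph f (rev (seg u k (length p))))"
    unfolding M_def pref_add by (simp add: morph_append_p)
  have "U x = (morph f (pref u M) @ p) ! x"
    using U_eq_nth_morph[OF \<open>x < pos M\<close>] \<open>x < pos M\<close> by (simp add: nth_append_left pos_def)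
  also have "\<dots> = ((morph f (pref u k) @ p) @ rev (morph f (rev (seg u k (length p))))) ! x"
    unfolding eq ..
  also have "\<dots> = (morph f (pref u k) @ p) ! x"
    using x by (intro nth_append_left) (simp add: pos_def)
  finally show "pref U (pos k + length p) ! x = (morph f (pref u k) @ p) ! x"
    using x by (simp add: pref_def)
qed (simp add: pos_def)

lemma seg_U_pos:
  "seg U (pos k) (length (morph f (seg u k n)) + length p) = morph f (seg u k n) @ p"
proof -
  have "drop (pos k) (pref U (pos (k + n) + length p)) = morph f (seg u k n) @ p"
    unfolding pref_U_pos by (simp add: pref_add pos_def)
  then show ?thesis
    by (simp add: drop_pref pos_add)
qed

lemma seg_U_pos_Suc: "seg U (pos k) (length (f (u k)) + length p) = f (u k) @ p"
  using seg_U_pos[of k 1] by (simp add: seg_Suc_0)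

lemma occurs_at_U_p_iff: "occurs_at U p x \<longleftrightarrow> (\<exists>k. x = pos k)"
proof
  assume occ: "occurs_at U p x"
  obtain k where k: "pos k \<le> x" "x < pos (Suc k)"
    by (rule pos_interval)
  define d where "d = x - pos k"
  have "seg U (pos k + d) (length p) = p"
    using occ k unfolding d_def occurs_at_iff_seg by simp
  moreover have "d \<le> length (f (u k))"
    using k pos_Suc[of k] unfolding d_def by simp
  then have "seg U (pos k + d) (length p) = take (length p) (drop d (f (u k) @ p))"
    unfolding seg_U_pos_Suc[symmetric] by (simp add: drop_seg take_seg)
  ultimately have "d \<in> occurrences p (f (u k) @ p)"
    unfolding occurrences_def using k pos_Suc[of k] unfolding d_def by simp
  then have "d = 0"
    using occurrences_p[of "u k"] k pos_Suc[of k] unfolding d_def by auto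
  then show "\<exists>k. x = pos k"
    using k unfolding d_def by auto
next
  assume "\<exists>k. x = pos k"
  then obtain k where "x = pos k"
    by blast
  then show "occurs_at U p x"
    using seg_U_pos[of k 0] by (simp add: occurs_at_iff_seg)
qed

lemma seg_U_before_pos:
  assumes "s \<le> pos k"
  shows "seg U (pos k - s) s = drop (pos k - s) (morph f (pref u k))"
proof -
  have "pref U (pos k) = morph f (pref u k)"
    using arg_cong[OF pref_U_pos[of k], of "take (pos k)"] by (simp add: take_pref pos_def)
  then show ?thesis
    using drop_pref[of "pos k - s" U "pos k"] assms by simp
qed

lemma seg_U_after_pos:
  assumes "s \<le> length (f (u k))"
  shows "seg U (pos k + length p) s = take s (rev (f (u k)))"
proof -
  have "drop (length p) (seg U (pos k) (length (f (u k)) + length p)) = rev (f (u k))"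
    unfolding seg_U_pos_Suc image_append_p by simp
  then have "take s (seg U (pos k + length p) (length (f (u k)))) = take s (rev (f (u k)))"
    by (simp add: drop_seg)
  then show ?thesis
    using assms by (simp add: take_seg)
qed

lemma seg_U_before_pos_iff:
  assumes "length a \<le> pos k"
  shows "seg U (pos k - length a) (length a) = a \<longleftrightarrow> suffix a (morph f (pref u k))"
  using seg_U_before_pos[OF assms] drop_eq_iff_suffix[of a "morph f (pref u k)"] assms
  by (simp add: pos_def)

lemma seg_U_after_pos_iff:
  assumes "length a \<le> length (f (u k))"
  shows "seg U (pos k + length p) (length a) = rev a \<longleftrightarrow> suffix a (f (u k))"
  using seg_U_after_pos[OF assms] take_rev_eq_iff_suffix[OF assms] by simp

lemma seg_U_block_palindrome_decompose:
  assumes "i \<le> j" "s \<le> pos i"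
  shows "seg U (pos i - s) (pos j - pos i + length p + 2 * s) =
    seg U (pos i - s) s @ (morph f (seg u i (j - i)) @ p) @ seg U (pos j + length p) s"
proof -
  define m where "m = length (morph f (seg u i (j - i))) + length p"
  have j: "pos j + length p = pos i + m"
    using pos_add[of i "j - i"] assms(1) unfolding m_def by simp
  have split: "seg U (pos i - s) (s + (m + s)) =
      seg U (pos i - s) s @ seg U (pos i - s + s) m @ seg U (pos i - s + s + m) s"
    unfolding seg_add[of U "pos i - s" s "m + s"] seg_add[of U "pos i - s + s" m s] ..
  have "pos i \<le> pos j"
    using assms(1) by simp
  then have start: "pos i - s + s = pos i" and len: "pos j - pos i + length p + 2 * s = s + (m + s)"
    using assms(2) j by linarith+
  have mid: "seg U (pos i) m = morph f (seg u i (j - i)) @ p"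
    unfolding m_def by (rule seg_U_pos)
  show ?thesis
    unfolding len split start j[symmetric] mid ..
qed

lemma palindrome_seg_U_blocks:
  assumes "i \<le> j" "palindrome (seg u i (j - i))"
    and "suffix a (morph f (pref u i))" "suffix a (f (u j))"
  shows "palindrome (seg U (pos i - length a) (pos j - pos i + length p + 2 * length a))"
proof -
  have "length a \<le> pos i"
    using suffix_length_le[OF assms(3)] by (simp add: pos_def)
  then have "seg U (pos i - length a) (pos j - pos i + length p + 2 * length a) =
      a @ (morph f (seg u i (j - i)) @ p) @ rev a"
    using seg_U_block_palindrome_decompose[OF assms(1)] assms(3,4)
      seg_U_before_pos_iff seg_U_after_pos_iff suffix_length_le by metis
  moreover have "palindrome (morph f (seg u i (j - i)) @ p)"
    using assms(2) palindrome_morph_append_p_iff by simp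
  then have "palindrome (a @ (morph f (seg u i (j - i)) @ p) @ rev a)"
    using palindrome_append_middle_iff[of a "rev a" "morph f (seg u i (j - i)) @ p"] by simp
  ultimately show ?thesis
    by simp
qed

lemma lps_pref_U_ge:
  assumes "i \<le> j" "palindrome (seg u i (j - i))"
    and "suffix a (morph f (pref u i))" "suffix a (f (u j))"
  shows "pos j - pos i + length p + 2 * length a \<le> length (lps (pref U (pos j + length p + length a)))"
proof (rule palindrome_seg_le_lps_pref[OF palindrome_seg_U_blocks[OF assms]])
  have "length a \<le> pos i" "pos i \<le> pos j"
    using suffix_length_le[OF assms(3)] assms(1) by (simp_all add: pos_def[symmetric])
  then show "pos i - length a + (pos j - pos i + length p + 2 * length a) = pos j + length p + length a"
    by linarith
qed

lemma first_occurrence_in_block: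
  assumes first: "\<forall>t<s. \<not> occurs_at U p (x + t)" and "0 < s" "x + s = pos i"
  shows "0 < i" "s < length (f (u (i - 1)))"
proof -
  show "0 < i"
    using assms(2,3) pos_less_iff[of 0 i] by simp
  then have i: "pos i = pos (i - 1) + length (f (u (i - 1)))"
    using pos_Suc[of "i - 1"] by simp
  show "s < length (f (u (i - 1)))"
  proof (rule ccontr)
    assume "\<not> s < length (f (u (i - 1)))"
    then have "x + (s - length (f (u (i - 1)))) = pos (i - 1)" "s - length (f (u (i - 1))) < s"
      using i assms(2,3) image_nonempty[of "u (i - 1)"] by auto
    moreover have "occurs_at U p (x + (s - length (f (u (i - 1)))))"
      using calculation(1) occurs_at_U_p_iff by auto
    ultimately show False
      using first by blast
  qed
qed

lemma last_occurrence_in_block: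
  assumes pal: "palindrome (seg U x l)" and first: "\<forall>t<s. \<not> occurs_at U p (x + t)"
    and xl: "x + l = pos j + length p + s" and long: "2 * s + length p \<le> l"
  shows "s < length (f (u j))"
proof (rule ccontr)
  assume short: "\<not> s < length (f (u j))"
  define e where "e = l - length p - s"
  have "x + (e + length (f (u j))) = pos (Suc j)"
    using xl long pos_Suc[of j] unfolding e_def by simp
  then have "occurs_at U p (x + (e + length (f (u j))))"
    using occurs_at_U_p_iff by auto
  moreover have "e + length (f (u j)) + length p \<le> l"
    using short long unfolding e_def by simp
  ultimately have "occurs_at U p (x + (l - length p - (e + length (f (u j)))))"
    by (rule occurs_at_palindrome_mirror[OF pal palindrome_p])
  moreover have "0 < length (f (u j))"
    using image_nonempty[of "u j"] by simp
  then have "l - length p - (e + length (f (u j))) < s"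
    using short long unfolding e_def by linarith
  ultimately show False
    using first by blast
qed

text \<open>The occurrences of \<open>p\<close> in \<open>U\<close> are exactly the block starts, and the palindrome maps its
  first occurrence of \<open>p\<close> onto its last one; the blocks in between decode to a palindrome of \<open>u\<close>.\<close>

lemma palindrome_seg_U_decompose:
  assumes pal: "palindrome (seg U x l)" and occ: "occurs_at U p (x + s)"
    and first: "\<forall>t<s. \<not> occurs_at U p (x + t)" and long: "2 * s + length p \<le> l"
  obtains i j where "x + s = pos i" "i \<le> j" "x + l = pos j + length p + s"
    "seg U x l = seg U x s @ (morph f (seg u i (j - i)) @ p) @ rev (seg U x s)"
    "palindrome (seg u i (j - i))" "suffix (seg U x s) (f (u j))"
    "0 < s \<Longrightarrow> 0 < i \<and> suffix (seg U x s) (f (u (i - 1)))"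
proof -
  obtain i where i: "x + s = pos i"
    using occ occurs_at_U_p_iff by blast
  have "occurs_at U p (x + (l - length p - s))"
    using occurs_at_palindrome_mirror[OF pal palindrome_p occ] long by simp
  then obtain j where j: "x + (l - length p - s) = pos j"
    using occurs_at_U_p_iff by blast
  have "pos i \<le> pos j" and s_le: "s \<le> pos i" and xl: "x + l = pos j + length p + s"
    using i j long by linarith+
  then have "i \<le> j"
    by simp
  have split: "seg U x l = seg U x s @ (morph f (seg u i (j - i)) @ p) @ seg U (pos j + length p) s"
  proof -
    have "pos i - s = x" "pos j - pos i + length p + 2 * s = l"
      using i xl \<open>pos i \<le> pos j\<close> by linarith+
    then show ?thesis
      using seg_U_block_palindrome_decompose[OF \<open>i \<le> j\<close> s_le] by simp
  qed
  have "palindrome (seg U x s @ (morph f (seg u i (j - i)) @ p) @ seg U (pos j + length p) s)"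
    using pal unfolding split .
  then have "palindrome (morph f (seg u i (j - i)) @ p)"
    and right: "seg U (pos j + length p) s = rev (seg U x s)"
    using palindrome_append_middle_iff[of "seg U x s" "seg U (pos j + length p) s"
        "morph f (seg u i (j - i)) @ p"] by simp_all
  then have "palindrome (seg u i (j - i))"
    by (simp add: palindrome_morph_append_p_iff)
  moreover have "suffix (seg U x s) (f (u j))"
    using right seg_U_after_pos_iff[of "seg U x s" j] last_occurrence_in_block[OF pal first xl long]
    by simp
  moreover have "0 < i \<and> suffix (seg U x s) (f (u (i - 1)))" if "0 < s"
  proof -
    have "0 < i" "s < length (f (u (i - 1)))"
      using first_occurrence_in_block[OF first that i] by simp_all
    moreover have "suffix (seg U x s) (morph f (pref u i))"
      using seg_U_before_pos_iff[of "seg U x s" i] s_le i[symmetric] by simp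
    ultimately show ?thesis
      using suffix_morph_pref_iff[of i "seg U x s" f u] by simp
  qed
  ultimately show thesis
    using that i \<open>i \<le> j\<close> xl split right by simp
qed

text \<open>The cut into blocks is determined by the occurrences of \<open>p\<close>, so two occurrences of the same
  palindrome of \<open>U\<close> are cut in the same way and decode to the same palindrome of \<open>u\<close>.\<close>

lemma repeated_palindrome_U_decode:
  assumes pal: "palindrome (seg U x0 l)" and rep: "seg U x1 l = seg U x0 l"
    and occ: "occurs_at U p (x0 + s)" and first: "\<forall>t<s. \<not> occurs_at U p (x0 + t)"
    and long: "2 * s + length p \<le> l"
  obtains i i' j where "x0 + s = pos i" "x1 + s = pos i'" "i \<le> j" "x0 + l = pos j + length p + s"
    "palindrome (seg u i (j - i))" "seg u i' (j - i) = seg u i (j - i)"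
    "suffix (seg U x0 s) (f (u j))" "suffix (seg U x0 s) (f (u (i' + (j - i))))"
    "0 < s \<Longrightarrow> 0 < i' \<and> suffix (seg U x0 s) (f (u (i' - 1))) \<and> suffix (seg U x0 s) (f (u (i - 1)))"
proof -
  define a where "a = seg U x0 s"
  have transfer: "occurs_at U p (x1 + t) \<longleftrightarrow> occurs_at U p (x0 + t)" if "t \<le> s" for t
    using occurs_at_seg_transfer[OF rep] that long by simp
  have "seg U x1 s = a"
    using rep long unfolding a_def by (metis le_add1 le_trans mult_2 take_seg)
  obtain i j where i: "x0 + s = pos i" and "i \<le> j" and j: "x0 + l = pos j + length p + s"
    and split0: "seg U x0 l = a @ (morph f (seg u i (j - i)) @ p) @ rev a"
    and pal_u: "palindrome (seg u i (j - i))" and suf_j: "suffix a (f (u j))"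
    and suf_i: "0 < s \<Longrightarrow> 0 < i \<and> suffix a (f (u (i - 1)))"
    using palindrome_seg_U_decompose[OF pal occ first long] unfolding a_def by blast
  obtain i' j' where i': "x1 + s = pos i'" and "i' \<le> j'"
    and split1: "seg U x1 l = a @ (morph f (seg u i' (j' - i')) @ p) @ rev a"
    and suf_j': "suffix a (f (u j'))" and suf_i': "0 < s \<Longrightarrow> 0 < i' \<and> suffix a (f (u (i' - 1)))"
    using palindrome_seg_U_decompose[of x1 l s] pal rep occ first long transfer
    unfolding \<open>seg U x1 s = a\<close> by (metis le_refl less_imp_le_nat)
  have "seg u i' (j' - i') = seg u i (j - i)"
    using split0 split1 rep morph_append_p_inj by simp
  then have "seg u i' (j - i) = seg u i (j - i)" and "j' = i' + (j - i)"
    using \<open>i' \<le> j'\<close> by (metis length_seg le_add_diff_inverse)+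
  then show thesis
    using that[of i i' j] i i' \<open>i \<le> j\<close> j pal_u suf_j suf_j' suf_i suf_i' unfolding a_def by simp
qed

lemma lps_pref_U_ge_lps_pref:
  assumes "pos j + length p \<le> m" "m < pos (Suc j) + length p"
  shows "length (lps (pref u (Suc j))) - 2 \<le> length (lps (pref U m))"
proof (cases "2 \<le> length (lps (pref u (Suc j)))")
  case True
  define l where "l = length (lps (pref u (Suc j)))"
  define i where "i = Suc (Suc j - l)"
  have "l \<le> Suc j"
    unfolding l_def by (rule length_lps_pref_le)
  have "palindrome (seg u (Suc j - l) l)"
    using lps_pref_eq_seg[of u "Suc j", folded l_def] palindrome_lps[of "pref u (Suc j)"] by simp
  moreover have "l - 2 + 2 = l"
    using True unfolding l_def by simp
  ultimately have "palindrome (seg u (Suc j - l) ((l - 2) + 2))"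
    by simp
  then have pal: "palindrome (seg u i (j - i))" and "u j = u (i - 1)" and "i \<le> j"
    using palindrome_seg_inner[of u "Suc j - l" "l - 2"] True \<open>l \<le> Suc j\<close>
    unfolding i_def l_def by simp_all
  \<comment> \<open>the part of the image of the border letter \<open>u j = u (i - 1)\<close> that fits before position \<open>m\<close>\<close>
  define a where "a = drop (length (f (u j)) - (m - length p - pos j)) (f (u j))"
  have "suffix a (f (u j))" "suffix a (morph f (pref u i))"
    using suffix_drop \<open>u j = u (i - 1)\<close> suffix_morph_pref_iff[of i a f u] unfolding a_def i_def
    by (metis, simp add: suffix_drop)
  moreover have "pos j + length p + length a = m"
    using assms pos_Suc[of j] unfolding a_def by simp
  ultimately have "pos j - pos i + length p + 2 * length a \<le> length (lps (pref U m))"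
    using lps_pref_U_ge[OF \<open>i \<le> j\<close> pal] by metis
  moreover have "j - i \<le> pos j - pos i"
    using pos_add_ge[of i "j - i"] \<open>i \<le> j\<close> by simp
  ultimately show ?thesis
    using \<open>l \<le> Suc j\<close> True unfolding i_def l_def by linarith
qed simp

end

section \<open>Images of rich binary words\<close>

lemma bool_eq_if_common_image_suffix:
  fixes f :: "bool \<Rightarrow> 'a list"
  assumes "\<not> (\<forall>b. suffix a (f b))" "suffix a (f b)" "suffix a (f c)"
  shows "b = c"
proof (rule ccontr)
  assume "b \<noteq> c"
  obtain d where "\<not> suffix a (f d)"
    using assms(1) by blast
  then show False
    using assms(2,3) \<open>b \<noteq> c\<close> by (cases b; cases c; cases d) simp_all
qed

lemma repeated_palindromic_suffix_extends_morph:
  fixes g :: "nat \<Rightarrow> bool" and f :: "bool \<Rightarrow> 'a list"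
  assumes rich: "rich_from g N" and "N \<le> j - i" "i' < i" "i \<le> j"
    and pal: "palindrome (seg g i (j - i))" and rep: "seg g i' (j - i) = seg g i (j - i)"
    and suf: "suffix a (f (g j))" "suffix a (f (g (i' + (j - i))))"
      "a \<noteq> [] \<Longrightarrow> 0 < i' \<and> suffix a (f (g (i' - 1))) \<and> suffix a (f (g (i - 1)))"
  obtains i3 where "i3 < i" "palindrome (seg g i3 (j - i3))" "suffix a (morph f (pref g i3))"
proof -
  have suffix_morph: "suffix a (morph f (pref g k))" if "0 < k" "suffix a (f (g (k - 1)))" for k
    using suffix_morph_pref_iff[of k a f g] that suffix_length_le[OF that(2)] by simp
  show thesis
  proof (cases "\<forall>b. suffix a (f b)")
    case True
    show thesis
    proof (cases "a = []")
      case True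
      have "N < j"
        using assms(2-4) by linarith
      then obtain i2 where "i2 < i" "palindrome (seg g i2 (j - i2))"
        by (rule repeated_palindromic_suffix_extends[OF rich _ \<open>i' < i\<close> \<open>i \<le> j\<close> pal rep])
      then show thesis
        using that \<open>a = []\<close> by simp
    next
      case False
      then have "0 < i'"
        using suf(3) by blast
      then obtain i3 where "0 < i3" "i3 < i" "palindrome (seg g i3 (j - i3))"
        by (rule repeated_palindromic_suffix_extends_nonzero[OF rich \<open>N \<le> j - i\<close> _ \<open>i' < i\<close> \<open>i \<le> j\<close> pal rep])
      then show thesis
        using that suffix_morph \<open>\<forall>b. suffix a (f b)\<close> by blast
    qed
  next
    case False
    then have same: "b = c" if "suffix a (f b)" "suffix a (f c)" for b c
      using that by (rule bool_eq_if_common_image_suffix)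
    have "a \<noteq> []"
      using False by (metis suffix_bot.bot_least)
    then have "0 < i'" "suffix a (f (g (i' - 1)))" "suffix a (f (g (i - 1)))"
      using suf(3) by blast+
    moreover have "N \<le> j"
      using \<open>N \<le> j - i\<close> by linarith
    ultimately obtain i3 where "0 < i3" "i3 < i" "g (i3 - 1) = g j" "palindrome (seg g i3 (j - i3))"
      using repeated_bordered_palindromic_suffix_extends[OF rich _ _ \<open>i' < i\<close> \<open>i \<le> j\<close> pal rep]
        same[OF _ suf(1)] suf(2) by blast
    then show thesis
      using that suffix_morph[of i3] suf(1) by simp
  qed
qed

locale P_ret_rich_image = P_ret_image f p u
  for f :: "bool \<Rightarrow> 'a list" and p and u +
  fixes N0 :: nat
  assumes rich_u: "rich_from u N0"
begin

definition K :: nat where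
  "K = max (length (f True)) (length (f False))"

lemma length_image_le_K: "length (f b) \<le> K"
  unfolding K_def by (cases b) auto

lemma pos_add_le: "pos (i + d) \<le> pos i + K * d"
proof (induction d)
  case (Suc d)
  then show ?case
    using pos_Suc[of "i + d"] length_image_le_K[of "u (i + d)"] by simp
qed simp

lemma first_occurrence_U:
  obtains s where "s < K" "occurs_at U p (x + s)" "\<forall>t<s. \<not> occurs_at U p (x + t)"
proof -
  obtain k where k: "pos k \<le> x" "x < pos (Suc k)"
    by (rule pos_interval)
  define t where "t = (if x = pos k then 0 else pos (Suc k) - x)"
  have "occurs_at U p (x + t)"
    using k occurs_at_U_p_iff unfolding t_def by auto
  have "0 < length (f (u k))"
    using image_nonempty[of "u k"] by simp
  then have "t < K"
    using k pos_Suc[of k] length_image_le_K[of "u k"] unfolding t_def by auto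
  define s where "s = (LEAST s. occurs_at U p (x + s))"
  have "occurs_at U p (x + s)" "s \<le> t" "\<forall>t<s. \<not> occurs_at U p (x + t)"
    unfolding s_def using \<open>occurs_at U p (x + t)\<close> by (auto intro: LeastI Least_le dest: not_less_Least)
  moreover have "s < K"
    using \<open>s \<le> t\<close> \<open>t < K\<close> by linarith
  ultimately show thesis
    using that by blast
qed

lemma lps_pref_U_unbounded:
  obtains T where "\<And>m. T \<le> m \<Longrightarrow> B \<le> length (lps (pref U m))"
proof -
  obtain T0 where T0: "\<And>n. T0 \<le> n \<Longrightarrow> B + 2 \<le> length (lps (pref u n))"
    using rich_from_lps_pref_unbounded[OF rich_u] by blast
  have "B \<le> length (lps (pref U m))" if "pos (Suc T0) + length p \<le> m" for m
  proof -
    obtain j where j: "pos j \<le> m - length p" "m - length p < pos (Suc j)"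
      by (rule pos_interval)
    then have "T0 < Suc j"
      using that pos_le_iff[of "Suc j" "Suc T0"] by linarith
    then have "B + 2 \<le> length (lps (pref u (Suc j)))"
      using T0 by simp
    moreover have "length (lps (pref u (Suc j))) - 2 \<le> length (lps (pref U m))"
      using j that by (intro lps_pref_U_ge_lps_pref) linarith+
    ultimately show ?thesis
      by linarith
  qed
  then show thesis
    using that by blast
qed

lemma repeated_palindrome_U_extends:
  assumes pal: "palindrome (seg U x0 l)" and rep: "seg U x1 l = seg U x0 l" and "x1 < x0"
    and long: "2 * K + length p + K * N0 \<le> l"
  obtains y where "y < x0" "palindrome (seg U y (x0 + l - y))"
proof -
  obtain s where "s < K" and occ: "occurs_at U p (x0 + s)" and first: "\<forall>t<s. \<not> occurs_at U p (x0 + t)"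
    by (rule first_occurrence_U)
  define a where "a = seg U x0 s"
  have "2 * s + length p \<le> l"
    using long \<open>s < K\<close> by simp
  then obtain i i' j where i: "x0 + s = pos i" and i': "x1 + s = pos i'" and "i \<le> j"
    and j: "x0 + l = pos j + length p + s"
    and pal_u: "palindrome (seg u i (j - i))" and rep_u: "seg u i' (j - i) = seg u i (j - i)"
    and suf: "suffix a (f (u j))" "suffix a (f (u (i' + (j - i))))"
    and suf_s: "0 < s \<Longrightarrow> 0 < i' \<and> suffix a (f (u (i' - 1))) \<and> suffix a (f (u (i - 1)))"
    by (rule repeated_palindrome_U_decode[OF pal rep occ first, folded a_def]) blast
  have suf_ne: "a \<noteq> [] \<Longrightarrow> 0 < i' \<and> suffix a (f (u (i' - 1))) \<and> suffix a (f (u (i - 1)))"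
    using suf_s unfolding a_def by (cases "s = 0") simp_all
  have "pos i' < pos i"
    using i i' \<open>x1 < x0\<close> by linarith
  then have "i' < i"
    by simp
  have "pos j \<le> pos i + K * (j - i)"
    using pos_add_le[of i "j - i"] \<open>i \<le> j\<close> by simp
  then have "K * N0 < K * (j - i)"
    using long i j \<open>s < K\<close> by linarith
  then have "N0 \<le> j - i"
    by simp
  obtain i3 where "i3 < i" and pal3: "palindrome (seg u i3 (j - i3))" and suf3: "suffix a (morph f (pref u i3))"
    by (rule repeated_palindromic_suffix_extends_morph[OF rich_u \<open>N0 \<le> j - i\<close> \<open>i' < i\<close> \<open>i \<le> j\<close> pal_u rep_u suf suf_ne])
  have "palindrome (seg U (pos i3 - s) (pos j - pos i3 + length p + 2 * s))"
    using palindrome_seg_U_blocks[of i3 j a] \<open>i3 < i\<close> \<open>i \<le> j\<close> pal3 suf3 suf(1) unfolding a_def by simp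
  moreover have "s \<le> pos i3"
    using suffix_length_le[OF suf3] unfolding a_def pos_def by simp
  moreover have "pos i3 < pos i" "pos i \<le> pos j"
    using \<open>i3 < i\<close> \<open>i \<le> j\<close> by simp_all
  ultimately have "pos i3 - s < x0" "x0 + l - (pos i3 - s) = pos j - pos i3 + length p + 2 * s"
    using i j by linarith+
  then show thesis
    using that[of "pos i3 - s"] \<open>palindrome (seg U (pos i3 - s) (pos j - pos i3 + length p + 2 * s))\<close>
    by simp
qed

lemma long_lps_pref_U_new:
  assumes long: "2 * K + length p + K * N0 \<le> length (lps (pref U (Suc m)))"
  shows "lps (pref U (Suc m)) \<notin> factors (pref U m)"
proof
  assume "lps (pref U (Suc m)) \<in> factors (pref U m)"
  define l where "l = length (lps (pref U (Suc m)))"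
  define x0 where "x0 = Suc m - l"
  have P: "lps (pref U (Suc m)) = seg U x0 l" and "l \<le> Suc m"
    unfolding l_def x0_def by (rule lps_pref_eq_seg, rule length_lps_pref_le)
  obtain x1 where "x1 + l \<le> m" and rep: "seg U x1 l = seg U x0 l"
    using \<open>lps (pref U (Suc m)) \<in> factors (pref U m)\<close> unfolding factors_pref_iff P by auto
  then have "x1 < x0"
    using \<open>l \<le> Suc m\<close> unfolding x0_def by linarith
  moreover have "palindrome (seg U x0 l)"
    using palindrome_lps P by metis
  ultimately obtain y where "y < x0" "palindrome (seg U y (x0 + l - y))"
    using repeated_palindrome_U_extends rep long unfolding l_def by blast
  moreover have "y + (x0 + l - y) = Suc m"
    using \<open>y < x0\<close> \<open>l \<le> Suc m\<close> unfolding x0_def by simp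
  ultimately have "x0 + l - y \<le> l"
    unfolding l_def using palindrome_seg_le_lps_pref by blast
  then show False
    using \<open>y < x0\<close> by simp
qed

lemma rich_from_U:
  obtains N where "rich_from U N"
proof -
  obtain T where "\<And>m. T \<le> m \<Longrightarrow> 2 * K + length p + K * N0 \<le> length (lps (pref U m))"
    using lps_pref_U_unbounded[of "2 * K + length p + K * N0"] by blast
  then have "rich_from U T"
    unfolding rich_from_def using long_lps_pref_U_new le_SucI by simp
  then show thesis
    by (rule that)
qed

end

lemma P_ret_morphism_if_class_P_ret:
  assumes "class_P_ret f"
  obtains p where "P_ret_morphism f p"
proof -
  obtain p where p: "palindrome p" "\<forall>b. palindrome (f b @ p)"
    and occ: "\<forall>b. card (occurrences p (f b @ p)) = 2 \<and> occurrences p (f b @ p) = {0, length (f b)}"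
    and "inj f"
    using assms unfolding class_P_ret_def by blast
  have "f b \<noteq> []" for b
  proof
    assume "f b = []"
    moreover have "card (occurrences p (f b @ p)) = 2" "occurrences p (f b @ p) = {0, length (f b)}"
      using occ by blast+
    ultimately show False
      by simp
  qed
  with p occ \<open>inj f\<close> have "P_ret_morphism f p"
    unfolding P_ret_morphism_def by blast
  then show thesis
    by (rule that)
qed

theorem proposition6p3:
  fixes u :: "nat \<Rightarrow> bool" and f :: "bool \<Rightarrow> 'a list"
  assumes "uniformly_recurrent u"
    and "defect_inf u < \<infinity>"
    and "class_P_ret f"
  shows "defect_inf (morph_inf f u) < \<infinity>"
proof -
  obtain N0 where "rich_from u N0"
    using rich_from_if_defect_inf_finite[OF assms(2)] .
  moreover obtain p where "P_ret_morphism f p"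
    using P_ret_morphism_if_class_P_ret[OF assms(3)] .
  ultimately interpret P_ret_rich_image f p u N0
    by (simp add: P_ret_rich_image_def P_ret_rich_image_axioms_def P_ret_image_def)
  obtain N where "rich_from (morph_inf f u) N"
    by (rule rich_from_U)
  then show ?thesis
    by (rule defect_inf_finite_if_rich_from)
qed

end
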